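(* Let $p=(p_1,\dots,p_n)$ be a sequence of positive integers with $\min_i p_i=2$, and let $I=\{i\in[n]: p_i=2\}$. For a set $W$ of functions $I\to[2]$ define $$A_W=\{x\in S_p:\ \exists f\in W \text{ with } x_i=f(i)\ \forall i\in I\},\qquad B_W=\{y\in S_p:\ \nexists f\in W \text{ with } y_i\ne f(i)\ \forall i\in I\}.$$ Then every cross-intersecting pair $A,B\subseteq S_p$ satisfies $|A|+|B|\le|S_p|$ and $|A|\cdot|B|\le|S_p|^2/4$; and a cross-intersecting pair $(A,B)$ satisfies $|A|\cdot|B|=|S_p|^2/4$ if and only if $A=A_W$ and $B=B_W$ for some set $W$ of functions $I\to[2]$ with $|W|=2^{|I|-1}$.
   Context: $[m]=\{1,\dots,m\}$. For a sequence of positive integers $p=(p_1,\dots,p_n)$, $S_p=[p_1]\times\cdots\times[p_n]$. Two vectors $x,y\in S_p$ intersect if $x_i=y_i$ for some $i\in[n]$; families $A,B\subseteq S_p$ are cross-intersecting if every $x\in A$ and $y\in B$ intersect. *)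

theory Defs
  imports Complex_Main "HOL-Library.FuncSet"
begin

definition Sp :: "nat list \<Rightarrow> nat list set" where
  "Sp p = {x. length x = length p \<and> (\<forall>i<length p. x ! i \<in> {1..p ! i})}"

definition intersects :: "nat list \<Rightarrow> nat list \<Rightarrow> bool" where
  "intersects x y \<longleftrightarrow> (\<exists>i<length x. i < length y \<and> x ! i = y ! i)"

definition cross_intersecting :: "nat list set \<Rightarrow> nat list set \<Rightarrow> bool" where
  "cross_intersecting A B \<longleftrightarrow> (\<forall>x\<in>A. \<forall>y\<in>B. intersects x y)"

definition twos :: "nat list \<Rightarrow> nat set" where
  "twos p = {i. i < length p \<and> p ! i = 2}"

definition A_W :: "nat list \<Rightarrow> (nat \<Rightarrow> nat) set \<Rightarrow> nat list set" where
  "A_W p W = {x \<in> Sp p. \<exists>f\<in>W. \<forall>i\<in>twos p. x ! i = f i}"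

definition B_W :: "nat list \<Rightarrow> (nat \<Rightarrow> nat) set \<Rightarrow> nat list set" where
  "B_W p W = {y \<in> Sp p. \<not> (\<exists>f\<in>W. \<forall>i\<in>twos p. y ! i \<noteq> f i)}"

end

theory Submission
  imports Defs
begin

(* Assume every p_i >= 2.  A coordinatewise fixed-point-free permutation g of S_p
   maps every x to a vector g(x) meeting x nowhere, so for cross-intersecting A, B the sets g(A)
   and B are disjoint; hence |A| + |B| <= |S_p|, and AM-GM gives |A||B| <= |S_p|^2/4.
   Equality in the product forces |A| = |B| = |S_p|/2, so B = S_p - g(A) for EVERY such g.
   Comparing the cyclic shift with the shift that moves a coordinate j with p_j >= 3 twice shows
   that A is closed under the cyclic shift of coordinate j, hence under arbitrary changes of every
   coordinate outside I = {i. p_i = 2}.  So A is determined by its set W of patterns on I, i.e.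
   A = A_W, and then B = S_p - shift(A_W) = B_W.  Counting |A_W| = |W| |S_p| / 2^|I| turns
   |A| = |S_p|/2 into |W| = 2^(|I|-1), and conversely. *)

text \<open>S_p is finite: its members are lists of length n with entries bounded by max p.\<close>

lemma finite_Sp: "finite (Sp p)"
proof -
  have "x ! i \<le> Max (set p)" if "x \<in> Sp p" "i < length p" for x i
  proof -
    have "x ! i \<le> p ! i" using that by (simp add: Sp_def)
    also have "p ! i \<le> Max (set p)" using that(2) by simp
    finally show ?thesis .
  qed
  then have "Sp p \<subseteq> {xs. set xs \<subseteq> {0..Max (set p)} \<and> length xs = length p}"
    by (auto simp: Sp_def in_set_conv_nth)
  then show ?thesis
    using finite_lists_length_eq[of "{0..Max (set p)}"] finite_subset by blast
qed

subsection \<open>Coordinatewise derangements\<close>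

definition coord_derangement :: "nat list \<Rightarrow> (nat \<Rightarrow> nat \<Rightarrow> nat) \<Rightarrow> bool" where
  "coord_derangement p g \<longleftrightarrow>
     (\<forall>i<length p. inj_on (g i) {1..p!i} \<and> (\<forall>a\<in>{1..p!i}. g i a \<in> {1..p!i} \<and> g i a \<noteq> a))"

definition apply_coords :: "(nat \<Rightarrow> nat \<Rightarrow> nat) \<Rightarrow> nat list \<Rightarrow> nat list" where
  "apply_coords g x = map (\<lambda>i. g i (x!i)) [0..<length x]"

lemma length_apply_coords [simp]: "length (apply_coords g x) = length x"
  by (simp add: apply_coords_def)

lemma nth_apply_coords [simp]: "i < length x \<Longrightarrow> apply_coords g x ! i = g i (x!i)"
  by (simp add: apply_coords_def)

lemma apply_coords_Sp: "coord_derangement p g \<Longrightarrow> x \<in> Sp p \<Longrightarrow> apply_coords g x \<in> Sp p"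
  by (auto simp: coord_derangement_def Sp_def)

lemma inj_on_apply_coords:
  assumes "coord_derangement p g"
  shows "inj_on (apply_coords g) (Sp p)"
proof (rule inj_onI)
  fix x y assume x: "x \<in> Sp p" and y: "y \<in> Sp p" and eq: "apply_coords g x = apply_coords g y"
  show "x = y"
  proof (rule nth_equalityI)
    show "length x = length y" using x y by (simp add: Sp_def)
    fix i assume "i < length x"
    then have i: "i < length p" "i < length y" using x y by (simp_all add: Sp_def)
    have "g i (x!i) = g i (y!i)" using arg_cong[OF eq, of "\<lambda>z. z ! i"] i x by (simp add: Sp_def)
    then show "x!i = y!i"
      using assms x y i unfolding coord_derangement_def Sp_def inj_on_def by blast
  qed
qed

text \<open>Being injective on the finite set S_p, a derangement permutes it.\<close>

lemma apply_coords_image_Sp: "coord_derangement p g \<Longrightarrow> apply_coords g ` Sp p = Sp p"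
  using endo_inj_surj[OF finite_Sp] apply_coords_Sp inj_on_apply_coords by blast

lemma not_intersects_apply_coords:
  assumes "coord_derangement p g" "x \<in> Sp p"
  shows "\<not> intersects x (apply_coords g x)"
proof
  assume "intersects x (apply_coords g x)"
  then obtain i where i: "i < length x" "x!i = g i (x!i)" by (auto simp: intersects_def)
  then have "i < length p" "x!i \<in> {1..p!i}" using assms(2) by (auto simp: Sp_def)
  then show False using assms(1) i(2) unfolding coord_derangement_def by metis
qed

text \<open>The basic bound: the image of A under a derangement is disjoint from B.  In the case of
  equality, B is exactly the complement of that image.\<close>

lemma cross_intersecting_card_bound:
  assumes g: "coord_derangement p g" and A: "A \<subseteq> Sp p" and B: "B \<subseteq> Sp p"
    and AB: "cross_intersecting A B"
  shows "card A + card B \<le> card (Sp p)"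
    and "card A + card B = card (Sp p) \<Longrightarrow> B = Sp p - apply_coords g ` A"
proof -
  let ?D = "apply_coords g ` A"
  have disj: "?D \<inter> B = {}"
    using AB A not_intersects_apply_coords[OF g] unfolding cross_intersecting_def by blast
  have D: "?D \<subseteq> Sp p" using A apply_coords_Sp[OF g] by blast
  have cD: "card ?D = card A"
    using card_image inj_on_subset[OF inj_on_apply_coords[OF g] A] by blast
  have fin: "finite ?D" "finite B" using D B finite_Sp finite_subset by blast+
  have "card (?D \<union> B) \<le> card (Sp p)" using D B by (intro card_mono[OF finite_Sp]) auto
  then show "card A + card B \<le> card (Sp p)" using card_Un_disjoint[OF fin disj] cD by simp
  assume eq: "card A + card B = card (Sp p)"
  have "card (Sp p - ?D) = card B" using card_Diff_subset[OF fin(1) D] cD eq by simp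
  moreover have "B \<subseteq> Sp p - ?D" using disj B by blast
  ultimately show "B = Sp p - ?D" using card_subset_eq[OF finite_Diff[OF finite_Sp]] by metis
qed

subsection \<open>Cyclic shifts\<close>

definition cyc_succ :: "nat \<Rightarrow> nat \<Rightarrow> nat" where
  "cyc_succ m a = (if a < m then a + 1 else 1)"

lemma cyc_succ_mod: "0 < m \<Longrightarrow> cyc_succ m (a mod m + 1) = Suc a mod m + 1"
  using mod_less_divisor[of m a] by (auto simp: cyc_succ_def mod_Suc Suc_lessI)

lemma cyc_succ_two_neq_iff: "a \<in> {1..2} \<Longrightarrow> b \<in> {1, 2} \<Longrightarrow> cyc_succ 2 a \<noteq> b \<longleftrightarrow> a = b"
  by (auto simp: cyc_succ_def)

definition shift :: "nat list \<Rightarrow> nat \<Rightarrow> nat \<Rightarrow> nat" where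
  "shift p i = cyc_succ (p!i)"

definition double_shift_at :: "nat list \<Rightarrow> nat \<Rightarrow> nat \<Rightarrow> nat \<Rightarrow> nat" where
  "double_shift_at p j i = (if i = j then cyc_succ (p!i) \<circ> cyc_succ (p!i) else cyc_succ (p!i))"

lemma coord_derangement_shift: "\<forall>i<length p. 2 \<le> p!i \<Longrightarrow> coord_derangement p (shift p)"
  by (auto simp: coord_derangement_def shift_def cyc_succ_def inj_on_def)

lemma coord_derangement_double_shift_at:
  "\<forall>i<length p. 2 \<le> p!i \<Longrightarrow> 3 \<le> p!j \<Longrightarrow> coord_derangement p (double_shift_at p j)"
  by (auto simp: coord_derangement_def double_shift_at_def cyc_succ_def inj_on_def)

subsection \<open>Extremal families are closed under changing coordinates with p_j >= 3\<close>

text \<open>If |A| + |B| = |S_p|, then B is the complement of g(A) for both derangements; so the two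
  images of A coincide, and since shift(x[j := succ x_j]) = double_shift_at j (x), the family A
  is closed under the cyclic shift of coordinate j.\<close>

lemma extremal_closed_under_shift:
  assumes ge: "\<forall>i<length p. 2 \<le> p!i" and A: "A \<subseteq> Sp p" and B: "B \<subseteq> Sp p"
    and AB: "cross_intersecting A B" and eq: "card A + card B = card (Sp p)"
    and j: "j < length p" "3 \<le> p!j" and x: "x \<in> A"
  shows "x[j := cyc_succ (p!j) (x!j)] \<in> A"
proof -
  note g1 = coord_derangement_shift[OF ge] and g2 = coord_derangement_double_shift_at[OF ge j(2)]
  have same_image: "apply_coords (shift p) ` A = apply_coords (double_shift_at p j) ` A"
  proof -
    have "Sp p - apply_coords (shift p) ` A = Sp p - apply_coords (double_shift_at p j) ` A"
      using cross_intersecting_card_bound(2)[OF g1 A B AB eq]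
        cross_intersecting_card_bound(2)[OF g2 A B AB eq] by simp
    moreover have "apply_coords (shift p) ` A \<subseteq> Sp p"
      "apply_coords (double_shift_at p j) ` A \<subseteq> Sp p"
      using A apply_coords_Sp[OF g1] apply_coords_Sp[OF g2] by blast+
    ultimately show ?thesis by blast
  qed
  define x' where "x' = x[j := cyc_succ (p!j) (x!j)]"
  have xS: "x \<in> Sp p" using x A by blast
  then have x'S: "x' \<in> Sp p"
    using j ge by (auto simp: Sp_def x'_def nth_list_update cyc_succ_def)
  have "apply_coords (shift p) x' = apply_coords (double_shift_at p j) x"
    using xS by (intro nth_equalityI)
      (auto simp: Sp_def x'_def nth_list_update shift_def double_shift_at_def)
  then have "apply_coords (shift p) x' \<in> apply_coords (shift p) ` A"
    using same_image x by simp
  then have "x' \<in> A"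
    using inj_on_apply_coords[OF g1] A x'S unfolding inj_on_def by blast
  then show ?thesis by (simp add: x'_def)
qed

text \<open>Closure under the cyclic shift of coordinate j gives closure under every value of that
  coordinate: the shift runs through all residues modulo m.\<close>

lemma closed_under_update_of_closed_under_cyc_succ:
  assumes closed: "\<forall>y\<in>A. y[j := cyc_succ m (y!j)] \<in> A"
    and x: "x \<in> A" "j < length x" "x!j \<in> {1..m}" and v: "v \<in> {1..m}"
  shows "x[j := v] \<in> A"
proof -
  have m: "0 < m" using v by simp
  have orbit: "x[j := (x!j - 1 + d) mod m + 1] \<in> A" for d
  proof (induction d)
    case 0
    have "x!j - 1 < m" using x(3) by auto
    then have "(x!j - 1) mod m + 1 = x!j" using x(3) by simp
    then show ?case using x(1) by simp
  next
    case (Suc d)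
    let ?c = "(x!j - 1 + d) mod m + 1"
    have "(x[j := ?c])[j := cyc_succ m (x[j := ?c] ! j)] = x[j := cyc_succ m ?c]"
      using x(2) by simp
    also have "cyc_succ m ?c = (x!j - 1 + Suc d) mod m + 1"
      using cyc_succ_mod[OF m] by simp
    finally show ?case using closed Suc.IH by metis
  qed
  have shift_back: "x!j - 1 + (v + m - x!j) = (v - 1) + m" using x(3) v by auto
  have "v - 1 < m" using v by auto
  then have "(v - 1 + m) mod m + 1 = v"
    using v by (simp only: mod_add_self2 mod_less) simp
  then have "(x!j - 1 + (v + m - x!j)) mod m + 1 = v" unfolding shift_back .
  then show ?thesis using orbit[of "v + m - x!j"] by simp
qed

text \<open>A family closed under arbitrary changes of the coordinates outside J contains every
  vector that agrees with one of its members on J; coordinates are changed one at a time.\<close>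

lemma closed_family_determined_on:
  assumes A: "A \<subseteq> Sp p"
    and closed: "\<And>x j v. x \<in> A \<Longrightarrow> j < length p \<Longrightarrow> j \<notin> J \<Longrightarrow> v \<in> {1..p!j} \<Longrightarrow>
                   x[j := v] \<in> A"
    and x: "x \<in> A" and y: "y \<in> Sp p" and agree: "\<forall>i\<in>J. y!i = x!i"
  shows "y \<in> A"
proof -
  define z where "z k = map (\<lambda>i. if i < k then y!i else x!i) [0..<length p]" for k
  have lx: "length x = length p" and ly: "length y = length p"
    using x A y by (auto simp: Sp_def)
  have "z k \<in> A" if "k \<le> length p" for k
    using that
  proof (induction k)
    case 0
    have "z 0 = x" by (rule nth_equalityI) (simp_all add: z_def lx)
    then show ?case using x by simp
  next
    case (Suc k)
    have step: "z (Suc k) = (z k)[k := y!k]"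
      by (rule nth_equalityI) (auto simp: z_def nth_list_update less_Suc_eq)
    show ?case
    proof (cases "k \<in> J")
      case True
      then have "z k ! k = y!k" using agree Suc.prems by (simp add: z_def)
      then have "(z k)[k := y!k] = z k" by (metis list_update_id)
      then show ?thesis using step Suc by simp
    next
      case False
      have "y!k \<in> {1..p!k}" using y Suc.prems by (simp add: Sp_def)
      then show ?thesis using closed[OF _ _ False] step Suc by simp
    qed
  qed
  moreover have "z (length p) = y" by (rule nth_equalityI) (simp_all add: z_def ly)
  ultimately show ?thesis by auto
qed

subsection \<open>Patterns on the coordinates with p_i = 2\<close>

definition pattern :: "nat list \<Rightarrow> nat list \<Rightarrow> nat \<Rightarrow> nat" where
  "pattern p x = restrict (\<lambda>i. x!i) (twos p)"

abbreviation patterns :: "nat list \<Rightarrow> (nat \<Rightarrow> nat) set" where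
  "patterns p \<equiv> twos p \<rightarrow>\<^sub>E {1, 2}"

lemma pattern_in_patterns: "x \<in> Sp p \<Longrightarrow> pattern p x \<in> patterns p"
  by (auto simp: pattern_def restrict_PiE_iff Sp_def twos_def)

lemma A_W_eq:
  assumes "W \<subseteq> patterns p"
  shows "A_W p W = {x \<in> Sp p. pattern p x \<in> W}"
proof -
  have "(\<exists>f\<in>W. \<forall>i\<in>twos p. x!i = f i) \<longleftrightarrow> pattern p x \<in> W" if x: "x \<in> Sp p" for x
  proof
    assume "\<exists>f\<in>W. \<forall>i\<in>twos p. x!i = f i"
    then obtain f where f: "f \<in> W" "\<forall>i\<in>twos p. x!i = f i" by blast
    have "f \<in> patterns p" using f(1) assms by blast
    then have "pattern p x = f"
      using f(2) by (intro PiE_ext[OF pattern_in_patterns[OF x]]) (auto simp: pattern_def)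
    then show "pattern p x \<in> W" using f(1) by simp
  next
    assume "pattern p x \<in> W"
    moreover have "\<forall>i\<in>twos p. x!i = pattern p x i" by (simp add: pattern_def)
    ultimately show "\<exists>f\<in>W. \<forall>i\<in>twos p. x!i = f i" by blast
  qed
  then show ?thesis unfolding A_W_def by blast
qed

lemma A_W_patterns: "A_W p (patterns p) = Sp p"
  using A_W_eq[of "patterns p" p] pattern_in_patterns by auto

text \<open>Counting: A_W is in bijection with W times the set of vectors with all-ones pattern, by
  overwriting the I-coordinates of such a vector with a pattern.\<close>

definition ones_on_twos :: "nat list \<Rightarrow> nat list set" where
  "ones_on_twos p = {x \<in> Sp p. \<forall>i\<in>twos p. x!i = 1}"

definition merge :: "nat list \<Rightarrow> (nat \<Rightarrow> nat) \<Rightarrow> nat list \<Rightarrow> nat list" where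
  "merge p f r = map (\<lambda>i. if i \<in> twos p then f i else r!i) [0..<length p]"

lemma length_merge [simp]: "length (merge p f r) = length p"
  by (simp add: merge_def)

lemma nth_merge [simp]: "i < length p \<Longrightarrow> merge p f r ! i = (if i \<in> twos p then f i else r!i)"
  by (simp add: merge_def)

lemma bij_betw_merge:
  assumes W: "W \<subseteq> patterns p"
  shows "bij_betw (\<lambda>(f, r). merge p f r) (W \<times> ones_on_twos p) (A_W p W)"
proof (rule bij_betw_byWitness[where f' = "\<lambda>x. (pattern p x, merge p (\<lambda>_. 1) x)"])
  have merge_Sp: "merge p f r \<in> Sp p" if "f \<in> patterns p" "r \<in> Sp p" for f r
    using that by (auto simp: Sp_def twos_def PiE_iff)
  have pattern_merge: "pattern p (merge p f r) = f" if f: "f \<in> patterns p" for f r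
  proof -
    have "pattern p (merge p f r) = restrict f (twos p)"
      unfolding pattern_def by (rule restrict_ext) (simp add: twos_def)
    also have "\<dots> = f" using f by (rule PiE_restrict)
    finally show ?thesis .
  qed
  have merge_ones: "merge p (\<lambda>_. 1) (merge p f r) = r" if "r \<in> ones_on_twos p" for f r
    using that by (auto simp: ones_on_twos_def Sp_def intro!: nth_equalityI)
  have ones_merge: "merge p (\<lambda>_. 1) x \<in> ones_on_twos p" if "x \<in> Sp p" for x
    using that by (auto simp: ones_on_twos_def Sp_def twos_def)
  show "\<forall>a\<in>W \<times> ones_on_twos p. (\<lambda>x. (pattern p x, merge p (\<lambda>_. 1) x)) ((\<lambda>(f, r). merge p f r) a) = a"
    using W pattern_merge merge_ones by auto
  show "\<forall>x\<in>A_W p W. (\<lambda>(f, r). merge p f r) (pattern p x, merge p (\<lambda>_. 1) x) = x"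
    by (auto simp: A_W_def Sp_def pattern_def intro!: nth_equalityI)
  show "(\<lambda>(f, r). merge p f r) ` (W \<times> ones_on_twos p) \<subseteq> A_W p W"
    using W merge_Sp pattern_merge by (auto simp: A_W_eq[OF W] ones_on_twos_def)
  show "(\<lambda>x. (pattern p x, merge p (\<lambda>_. 1) x)) ` A_W p W \<subseteq> W \<times> ones_on_twos p"
    using ones_merge by (auto simp: A_W_eq[OF W])
qed

lemma card_A_W: "W \<subseteq> patterns p \<Longrightarrow> card (A_W p W) = card W * card (ones_on_twos p)"
  using bij_betw_same_card[OF bij_betw_merge] by (simp add: card_cartesian_product)

lemma card_Sp: "card (Sp p) = 2 ^ card (twos p) * card (ones_on_twos p)"
proof -
  have "card (patterns p) = 2 ^ card (twos p)"
    using card_PiE[of "twos p" "\<lambda>_. {1::nat, 2}"] by (simp add: twos_def numeral_2_eq_2)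
  then show ?thesis using card_A_W[of "patterns p" p] A_W_patterns by simp
qed

text \<open>The factor |S_p| / 2^|I| is positive, so it can be cancelled when comparing sizes.\<close>

lemma ones_on_twos_nonempty:
  assumes "\<forall>i<length p. 1 \<le> p!i"
  shows "0 < card (ones_on_twos p)"
proof -
  have "replicate (length p) 1 \<in> ones_on_twos p"
    using assms by (auto simp: ones_on_twos_def Sp_def twos_def)
  moreover have "finite (ones_on_twos p)"
    using finite_Sp finite_subset by (auto simp: ones_on_twos_def)
  ultimately show ?thesis using card_gt_0_iff by blast
qed

text \<open>B_W is the complement of the shifted copy of A_W: on a coordinate with p_i = 2 the shift
  swaps 1 and 2, so "y_i differs from f i on all of I" says that the preimage of y has pattern f.\<close>

lemma B_W_eq:
  assumes ge: "\<forall>i<length p. 2 \<le> p!i" and W: "W \<subseteq> patterns p"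
  shows "B_W p W = Sp p - apply_coords (shift p) ` A_W p W"
proof -
  note g = coord_derangement_shift[OF ge]
  have avoid_iff:
    "(\<exists>f\<in>W. \<forall>i\<in>twos p. apply_coords (shift p) x ! i \<noteq> f i) \<longleftrightarrow> x \<in> A_W p W"
    if x: "x \<in> Sp p" for x
  proof -
    have "apply_coords (shift p) x ! i \<noteq> f i \<longleftrightarrow> x ! i = f i"
      if i: "i \<in> twos p" and f: "f \<in> W" for i f
    proof -
      have "i < length p" "p ! i = 2" using i by (auto simp: twos_def)
      then have "x ! i \<in> {1..2}" "apply_coords (shift p) x ! i = cyc_succ 2 (x ! i)"
        using x by (auto simp: Sp_def shift_def)
      moreover have "f i \<in> {1, 2}" using W f i by blast
      ultimately show ?thesis using cyc_succ_two_neq_iff by simp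
    qed
    then show ?thesis using x unfolding A_W_def by auto
  qed
  have "B_W p W = apply_coords (shift p) ` (Sp p - A_W p W)"
  proof (intro equalityI subsetI)
    fix y assume y: "y \<in> B_W p W"
    then have "y \<in> apply_coords (shift p) ` Sp p"
      using apply_coords_image_Sp[OF g] by (simp add: B_W_def)
    then obtain x where x: "x \<in> Sp p" "y = apply_coords (shift p) x" by blast
    then have "x \<notin> A_W p W" using y avoid_iff[OF x(1)] unfolding B_W_def by blast
    then show "y \<in> apply_coords (shift p) ` (Sp p - A_W p W)" using x by blast
  next
    fix y assume "y \<in> apply_coords (shift p) ` (Sp p - A_W p W)"
    then obtain x where x: "x \<in> Sp p" "x \<notin> A_W p W" and y: "y = apply_coords (shift p) x"
      by blast
    then show "y \<in> B_W p W"
      using avoid_iff[OF x(1)] apply_coords_Sp[OF g x(1)] unfolding B_W_def by blast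
  qed
  also have "\<dots> = Sp p - apply_coords (shift p) ` A_W p W"
    using inj_on_image_set_diff[OF inj_on_apply_coords[OF g]] apply_coords_image_Sp[OF g]
    by (simp add: A_W_def)
  finally show ?thesis .
qed

lemma card_B_W:
  assumes ge: "\<forall>i<length p. 2 \<le> p!i" and W: "W \<subseteq> patterns p"
  shows "card (B_W p W) = card (Sp p) - card (A_W p W)"
proof -
  note g = coord_derangement_shift[OF ge]
  have A: "A_W p W \<subseteq> Sp p" by (auto simp: A_W_def)
  then have "apply_coords (shift p) ` A_W p W \<subseteq> Sp p" using apply_coords_Sp[OF g] by blast
  moreover have "card (apply_coords (shift p) ` A_W p W) = card (A_W p W)"
    using card_image inj_on_subset[OF inj_on_apply_coords[OF g] A] by blast
  ultimately show ?thesis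
    using B_W_eq[OF ge W] card_Diff_subset finite_subset[OF _ finite_Sp] by metis
qed

subsection \<open>The structure of pairs attaining the sum bound\<close>

text \<open>If |A| + |B| = |S_p| then A is closed under changing the coordinates outside I, hence
  consists of all vectors whose pattern is a pattern of A; B is then the corresponding B_W.\<close>

lemma extremal_pair_structure:
  assumes ge: "\<forall>i<length p. 2 \<le> p!i" and A: "A \<subseteq> Sp p" and B: "B \<subseteq> Sp p"
    and AB: "cross_intersecting A B" and eq: "card A + card B = card (Sp p)"
  shows "pattern p ` A \<subseteq> patterns p" and "A = A_W p (pattern p ` A)"
    and "B = B_W p (pattern p ` A)"
proof -
  show W: "pattern p ` A \<subseteq> patterns p" using A pattern_in_patterns by blast
  have closed: "x[j := v] \<in> A"
    if x: "x \<in> A" and j: "j < length p" "j \<notin> twos p" and v: "v \<in> {1..p!j}" for x j v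
  proof -
    have "3 \<le> p!j" using ge j by (force simp: twos_def)
    moreover have "j < length x" "x!j \<in> {1..p!j}" using x j A by (auto simp: Sp_def)
    ultimately show ?thesis
      using closed_under_update_of_closed_under_cyc_succ v x
        extremal_closed_under_shift[OF ge A B AB eq j(1)] by blast
  qed
  show AW: "A = A_W p (pattern p ` A)"
  proof
    show "A \<subseteq> A_W p (pattern p ` A)" using A by (auto simp: A_W_eq[OF W])
    show "A_W p (pattern p ` A) \<subseteq> A"
    proof
      fix y assume "y \<in> A_W p (pattern p ` A)"
      then obtain x where y: "y \<in> Sp p" and x: "x \<in> A" "pattern p y = pattern p x"
        by (auto simp: A_W_eq[OF W])
      have "\<forall>i\<in>twos p. y!i = x!i" using x(2) by (metis pattern_def restrict_apply')
      then show "y \<in> A" using closed_family_determined_on[OF A closed x(1) y] by blast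
    qed
  qed
  show "B = B_W p (pattern p ` A)"
    using cross_intersecting_card_bound(2)[OF coord_derangement_shift[OF ge] A B AB eq]
      B_W_eq[OF ge W] AW[symmetric] by simp
qed

lemma half_size_pairs_iff:
  assumes ge: "\<forall>i<length p. 2 \<le> p!i" and I: "twos p \<noteq> {}"
    and A: "A \<subseteq> Sp p" and B: "B \<subseteq> Sp p" and AB: "cross_intersecting A B"
  shows "2 * card A = card (Sp p) \<and> 2 * card B = card (Sp p) \<longleftrightarrow>
    (\<exists>W. W \<subseteq> patterns p \<and> card W = 2 ^ (card (twos p) - 1) \<and> A = A_W p W \<and> B = B_W p W)"
    (is "?halves \<longleftrightarrow> (\<exists>W. ?pair W)")
proof -
  define h where "h = 2 ^ (card (twos p) - 1) * card (ones_on_twos p)"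
  have "0 < card (twos p)" using I by (simp add: card_gt_0_iff twos_def)
  then have half: "card (Sp p) = 2 * h"
    unfolding h_def card_Sp by (metis Suc_diff_1 mult.assoc power_Suc)
  have R: "0 < card (ones_on_twos p)" using ones_on_twos_nonempty ge by force
  show ?thesis
  proof
    assume halves: ?halves
    then have "card A + card B = card (Sp p)" by simp
    note shape = extremal_pair_structure[OF ge A B AB this]
    have "card A = card (pattern p ` A) * card (ones_on_twos p)"
      using card_A_W[OF shape(1)] shape(2) by simp
    then have "card (pattern p ` A) = 2 ^ (card (twos p) - 1)"
      using halves half R by (simp add: h_def)
    then show "\<exists>W. ?pair W" using shape by blast
  next
    assume "\<exists>W. ?pair W"
    then obtain W where W: "W \<subseteq> patterns p" "card W = 2 ^ (card (twos p) - 1)"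
      and AB_W: "A = A_W p W" "B = B_W p W" by blast
    have "card A = h" using card_A_W[OF W(1)] W(2) AB_W(1) by (simp add: h_def)
    moreover have "card B = card (Sp p) - card A" using card_B_W[OF ge W(1)] AB_W by simp
    ultimately show ?halves using half by simp
  qed
qed

text \<open>If a + b <= s then a b <= s^2/4, since 4 a b = (a + b)^2 - (a - b)^2.\<close>

lemma product_le_quarter_square:
  fixes a b s :: real
  assumes "0 \<le> a" "0 \<le> b" "a + b \<le> s"
  shows "a * b \<le> s^2 / 4"
proof -
  have "(a + b)^2 \<le> s^2" using assms by (intro power_mono) auto
  moreover have "0 \<le> (a - b)^2" by simp
  ultimately show ?thesis by (simp add: power2_eq_square algebra_simps)
qed

lemma product_eq_quarter_square_iff:
  fixes a b s :: nat
  assumes "a + b \<le> s"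
  shows "real a * real b = real s ^ 2 / 4 \<longleftrightarrow> 2 * a = s \<and> 2 * b = s"
proof
  assume prod: "real a * real b = real s ^ 2 / 4"
  have "(real a + real b)^2 \<le> (real s)^2" using assms by (intro power_mono) auto
  then have "(real a - real b)^2 \<le> 0" using prod by (simp add: power2_eq_square algebra_simps)
  then have "a = b" by simp
  then have "(2 * real a)^2 = (real s)^2" using prod by (simp add: power2_eq_square algebra_simps)
  then have "2 * real a = real s" by (rule power2_eq_imp_eq) simp_all
  then show "2 * a = s \<and> 2 * b = s" using \<open>a = b\<close> by linarith
next
  assume "2 * a = s \<and> 2 * b = s"
  then show "real a * real b = real s ^ 2 / 4" by (auto simp: power2_eq_square)
qed

theorem mainTheorem12:
  fixes p :: "nat list"
  assumes "p \<noteq> []"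
    and "\<forall>i<length p. p ! i > 0"
    and "Min (set p) = 2"
  shows "(\<forall>A B. A \<subseteq> Sp p \<and> B \<subseteq> Sp p \<and> cross_intersecting A B \<longrightarrow>
            card A + card B \<le> card (Sp p) \<and>
            real (card A) * real (card B) \<le> real (card (Sp p))^2 / 4)
       \<and> (\<forall>A B. A \<subseteq> Sp p \<and> B \<subseteq> Sp p \<and> cross_intersecting A B \<longrightarrow>
            (real (card A) * real (card B) = real (card (Sp p))^2 / 4 \<longleftrightarrow>
             (\<exists>W. W \<subseteq> (twos p \<rightarrow>\<^sub>E {1, 2}) \<and> card W = 2 ^ (card (twos p) - 1) \<and>
                  A = A_W p W \<and> B = B_W p W)))"
proof -
  have ge: "\<forall>i<length p. 2 \<le> p!i"
    using assms(3) by (metis List.finite_set Min_le nth_mem)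
  have "2 \<in> set p" using Min_in[of "set p"] assms(1,3) by simp
  then have I: "twos p \<noteq> {}" by (auto simp: twos_def in_set_conv_nth)
  have sum_bound: "card A + card B \<le> card (Sp p)"
    if "A \<subseteq> Sp p \<and> B \<subseteq> Sp p \<and> cross_intersecting A B" for A B
    using cross_intersecting_card_bound(1)[OF coord_derangement_shift[OF ge]] that by blast
  show ?thesis
  proof (intro conjI allI impI)
    fix A B assume AB: "A \<subseteq> Sp p \<and> B \<subseteq> Sp p \<and> cross_intersecting A B"
    show "card A + card B \<le> card (Sp p)" using sum_bound[OF AB] .
    show "real (card A) * real (card B) \<le> real (card (Sp p))^2 / 4"
      using sum_bound[OF AB] by (intro product_le_quarter_square) simp_all
  next
    fix A B assume AB: "A \<subseteq> Sp p \<and> B \<subseteq> Sp p \<and> cross_intersecting A B"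
    then show "real (card A) * real (card B) = real (card (Sp p))^2 / 4 \<longleftrightarrow>
             (\<exists>W. W \<subseteq> (twos p \<rightarrow>\<^sub>E {1, 2}) \<and> card W = 2 ^ (card (twos p) - 1) \<and>
                  A = A_W p W \<and> B = B_W p W)"
      using product_eq_quarter_square_iff[OF sum_bound[OF AB]] half_size_pairs_iff[OF ge I]
      by blast
  qed
qed

end
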